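(* Let $q$ be a power of $2$, $n\ge 4$, and let $M$ be an $n\times n$ matrix with entries in $\mathbb{F}_q$. Then $0\in\mathrm{Num}'_0(M)_q$.
   Context: For $M=(m_{ij})$ with entries in $\mathbb{F}_q$ and $u=(x_1,\dots,x_n)\in\mathbb{F}_q^n$, with the Hermitian form $\langle u,v\rangle=\sum_i u_i^qv_i$ one has $\langle u,u\rangle=\sum_i x_i^2$ and $\langle u,Mu\rangle=\sum_{i,j}m_{ij}x_ix_j$. $\mathrm{Num}'_0(M)_q=\{\langle u,Mu\rangle: u\in\mathbb{F}_q^n\setminus\{0\},\ \langle u,u\rangle=0\}$. *)

theory Defs
  imports "HOL-Analysis.Analysis"
begin

definition herm :: "'a::{finite,field}^'n \<Rightarrow> 'a^'n \<Rightarrow> 'a" where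
  "herm u v = (\<Sum>i\<in>UNIV. (u $ i) ^ CARD('a) * (v $ i))"

definition num0' :: "'a::{finite,field}^'n^'n \<Rightarrow> 'a set" where
  "num0' M = {herm u (M *v u) | u. u \<noteq> 0 \<and> herm u u = 0}"

end

theory Submission
  imports Defs "HOL-Number_Theory.Residues"
begin

text \<open>In characteristic 2 the Frobenius power \<open>x\<^sup>q = x\<close> makes the Hermitian form the
  standard bilinear one, so \<open>\<langle>u,u\<rangle> = (\<Sum>\<^sub>i u\<^sub>i)\<^sup>2\<close>: the isotropic vectors form the
  hyperplane \<open>\<Sum>\<^sub>i u\<^sub>i = 0\<close>, of dimension \<open>n - 1 \<ge> 3\<close>, and \<open>Q u = \<langle>u,Mu\<rangle>\<close> is a quadratic form.
  Given independent \<open>v\<^sub>1, v\<^sub>2, v\<^sub>3\<close> in the hyperplane, choose \<open>w \<noteq> 0\<close> in the span of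
  \<open>v\<^sub>2, v\<^sub>3\<close> orthogonal to \<open>v\<^sub>1\<close> for the polar form of \<open>Q\<close>. Then
  \<open>Q (x v\<^sub>1 + y w) = x\<^sup>2 Q v\<^sub>1 + y\<^sup>2 Q w\<close>, and as every element of \<open>\<bbbF>\<^sub>q\<close> is a square,
  \<open>x = \<surd>(Q w)\<close>, \<open>y = \<surd>(Q v\<^sub>1)\<close> give \<open>Q = 2 (x y)\<^sup>2 = 0\<close>.\<close>

lemma char_two_if_card_power_two:
  assumes "CARD('a::{finite,field}) = 2 ^ k"
  shows "(2::'a) = 0"
proof -
  have "prime CHAR('a)"
    by (intro prime_CHAR_semidom finite_imp_CHAR_pos) simp
  moreover have "CHAR('a) dvd 2 ^ k"
    using CHAR_dvd_CARD assms by metis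
  ultimately have "CHAR('a) = 2"
    by (metis prime_dvd_power primes_dvd_imp_eq two_is_prime_nat)
  then show ?thesis
    using of_nat_CHAR[where 'a='a] by simp
qed

lemma power_card_eq_self:
  fixes x :: "'a::{finite,field}"
  shows "x ^ CARD('a) = x"
proof (cases "x = 0")
  case False
  let ?U = "UNIV - {0::'a}"
  have "inj_on ((*) x) ?U"
    using False by (auto intro: inj_onI)
  moreover have "(*) x ` ?U = ?U"
  proof (intro equalityI subsetI)
    fix z assume "z \<in> ?U"
    with False have "z = x * (z / x)" "z / x \<in> ?U"
      by auto
    then show "z \<in> (*) x ` ?U"
      by blast
  qed (use False in auto)
  ultimately have "\<Prod>?U = (\<Prod>y\<in>?U. x * y)"
    using prod.reindex[of "(*) x" ?U id] by simp
  also have "\<dots> = x ^ card ?U * \<Prod>?U"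
    by (simp add: prod.distrib)
  finally have "x ^ card ?U = 1"
    by simp
  moreover have "CARD('a) = Suc (card ?U)"
    by (simp add: card_Diff_singleton)
  ultimately show ?thesis
    by (metis power_Suc2 mult_1)
qed simp

lemma herm_eq_sum: "herm u v = (\<Sum>i\<in>UNIV. u $ i * v $ i)"
  by (simp add: herm_def power_card_eq_self)

lemma herm_add_left: "herm (u + v) w = herm u w + herm v w"
  by (simp add: herm_eq_sum distrib_right sum.distrib)

lemma herm_add_right: "herm u (v + w) = herm u v + herm u w"
  by (simp add: herm_eq_sum distrib_left sum.distrib)

lemma herm_scale_left: "herm (c *s u) v = c * herm u v"
  by (simp add: herm_eq_sum sum_distrib_left mult.assoc)

lemma herm_scale_right: "herm u (c *s v) = c * herm u v"
  by (simp add: herm_eq_sum sum_distrib_left mult.left_commute)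

lemma matrix_vector_mult_scale: "A *v (c *s v) = c *s (A *v (v::'a::comm_ring_1^'n))"
  by (simp add: matrix_vector_mult_def vec_eq_iff sum_distrib_left mult.left_commute)

lemma power2_sum_char_two:
  assumes "(2::'a::comm_ring_1) = 0"
  shows "(\<Sum>i\<in>A. f i) ^ 2 = (\<Sum>i\<in>A. (f i :: 'a) ^ 2)"
proof (induction A rule: infinite_finite_induct)
  case (insert i A)
  have "(f i + sum f A) ^ 2 = f i ^ 2 + sum f A ^ 2 + 2 * f i * sum f A"
    by (simp add: power2_eq_square algebra_simps)
  with insert assms show ?case
    by simp
qed simp_all

lemma herm_self_char_two:
  fixes u :: "'a::{finite,field}^'n"
  assumes "(2::'a) = 0"
  shows "herm u u = (\<Sum>i\<in>UNIV. u $ i) ^ 2"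
  by (simp add: herm_eq_sum power2_sum_char_two[OF assms] flip: power2_eq_square)

lemma exists_square_root_char_two:
  assumes "(2::'a::{finite,field}) = 0"
  shows "\<exists>s. z = (s::'a) ^ 2"
proof -
  have "inj (\<lambda>s::'a. s ^ 2)"
  proof (rule injI)
    fix s t :: 'a
    assume "s ^ 2 = t ^ 2"
    moreover have "(s - t) ^ 2 = s ^ 2 - t ^ 2 - 2 * t * (s - t)"
      by (simp add: power2_eq_square algebra_simps)
    ultimately show "s = t"
      using assms by simp
  qed
  then show ?thesis
    by (metis finite_UNIV_inj_surj finite_class.finite_UNIV surjD)
qed

definition polar :: "'a::{finite,field}^'n^'n \<Rightarrow> 'a^'n \<Rightarrow> 'a^'n \<Rightarrow> 'a" where
  "polar M v w = herm v (M *v w) + herm w (M *v v)"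

lemma polar_linear_right: "polar M v (c *s u + d *s w) = c * polar M v u + d * polar M v w"
  by (simp add: polar_def herm_add_left herm_add_right herm_scale_left herm_scale_right
      matrix_vector_right_distrib matrix_vector_mult_scale algebra_simps)

lemma quadratic_form_expand:
  "herm (x *s v + y *s w) (M *v (x *s v + y *s w)) =
     x ^ 2 * herm v (M *v v) + x * y * polar M v w + y ^ 2 * herm w (M *v w)"
  by (simp add: polar_def herm_add_left herm_add_right herm_scale_left herm_scale_right
      matrix_vector_right_distrib matrix_vector_mult_scale power2_eq_square algebra_simps)

lemma exists_polar_orthogonal:
  "\<exists>c d. (c \<noteq> 0 \<or> d \<noteq> 0) \<and> polar M v (c *s u + d *s w) = 0"
proof (cases "polar M v u = 0")
  case True
  show ?thesis
    by (rule exI[of _ 1], rule exI[of _ 0]) (simp add: True)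
next
  case False
  show ?thesis
    by (rule exI[of _ "polar M v w"], rule exI[of _ "- polar M v u"])
      (unfold polar_linear_right, simp add: False mult.commute)
qed

lemma quadratic_form_zero_in_polar_orthogonal_plane:
  assumes two: "(2::'a::{finite,field}) = 0"
    and orth: "polar M v w = 0"
  shows "\<exists>x y. (x \<noteq> 0 \<or> y \<noteq> 0) \<and>
    herm (x *s v + y *s w) (M *v (x *s v + y *s w)) = (0::'a)"
proof (cases "herm v (M *v v) = 0")
  case True
  show ?thesis
    by (rule exI[of _ 1], rule exI[of _ 0]) (simp add: True)
next
  case False
  obtain x where x: "herm w (M *v w) = x ^ 2"
    using exists_square_root_char_two[OF two] by blast
  obtain y where y: "herm v (M *v v) = y ^ 2"
    using exists_square_root_char_two[OF two] by blast
  have "herm (x *s v + y *s w) (M *v (x *s v + y *s w)) = 2 * (x * y) ^ 2"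
    unfolding quadratic_form_expand orth x y by (simp add: power_mult_distrib)
  also have "\<dots> = 0"
    using two by simp
  finally have "herm (x *s v + y *s w) (M *v (x *s v + y *s w)) = 0" .
  moreover have "y \<noteq> 0"
    using False y by auto
  ultimately show ?thesis
    by blast
qed

lemma quadratic_form_zero_in_span3:
  assumes two: "(2::'a::{finite,field}) = 0"
    and indep: "\<And>x y z. x *s v1 + y *s v2 + z *s v3 = 0 \<Longrightarrow> x = 0 \<and> y = 0 \<and> z = (0::'a)"
  shows "\<exists>u. u \<noteq> 0 \<and> herm u (M *v u) = 0 \<and> (\<exists>x y z. u = x *s v1 + y *s v2 + z *s v3)"
proof -
  obtain c d where cd: "c \<noteq> 0 \<or> d \<noteq> 0" and orth: "polar M v1 (c *s v2 + d *s v3) = 0"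
    using exists_polar_orthogonal[of M v1 v2 v3] by blast
  obtain x y where xy: "x \<noteq> 0 \<or> y \<noteq> 0"
    and iso: "herm (x *s v1 + y *s (c *s v2 + d *s v3)) (M *v (x *s v1 + y *s (c *s v2 + d *s v3))) = 0"
    using quadratic_form_zero_in_polar_orthogonal_plane[OF two orth] by blast
  define u where "u = x *s v1 + (y * c) *s v2 + (y * d) *s v3"
  have "x *s v1 + y *s (c *s v2 + d *s v3) = u"
    by (simp add: u_def vector_add_ldistrib add.assoc)
  with iso have "herm u (M *v u) = 0"
    by simp
  moreover have "u \<noteq> 0"
  proof
    assume "u = 0"
    then have "x = 0 \<and> y * c = 0 \<and> y * d = 0"
      unfolding u_def by (rule indep)
    with xy cd show False
      by simp
  qed
  ultimately show ?thesis
    using u_def by blast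
qed

lemma sum_axis: "(\<Sum>i\<in>UNIV. axis k c $ i) = (c::'a::comm_monoid_add)"
  by (simp add: axis_def)

lemma axis_pairs_independent:
  fixes a b c d :: "'n::finite"
  assumes "b \<noteq> a" "c \<noteq> a" "d \<noteq> a" "b \<noteq> c" "b \<noteq> d" "c \<noteq> d"
    and "x *s (axis a 1 + axis b 1) + y *s (axis a 1 + axis c 1) + z *s (axis a 1 + axis d 1)
      = (0::'a::ring_1^'n)"
  shows "x = 0 \<and> y = 0 \<and> z = 0"
proof -
  let ?u = "x *s (axis a 1 + axis b 1) + y *s (axis a 1 + axis c 1) + z *s (axis a 1 + axis d (1::'a))"
  have "?u $ b = x" "?u $ c = y" "?u $ d = z"
    using assms(1-6) by (simp_all add: axis_def)
  with assms(7) show ?thesis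
    by (metis zero_index)
qed

lemma four_distinct_elements:
  assumes "CARD('n) \<ge> 4"
  obtains a b c d :: "'n::finite" where "b \<noteq> a" "c \<noteq> a" "d \<noteq> a" "b \<noteq> c" "b \<noteq> d" "c \<noteq> d"
proof -
  obtain A :: "'n set" where "card A = 4"
    using assms by (meson obtain_subset_with_card_n)
  then have "\<exists>a b c d :: 'n. b \<noteq> a \<and> c \<noteq> a \<and> d \<noteq> a \<and> b \<noteq> c \<and> b \<noteq> d \<and> c \<noteq> d"
    by (auto simp: card_Suc_eq numeral_eq_Suc)
  with that show ?thesis
    by blast
qed

theorem corollary2:
  fixes M :: "'a::{finite,field}^'n::finite^'n"
  assumes "\<exists>k. CARD('a) = 2 ^ k"
    and "CARD('n) \<ge> 4"
  shows "0 \<in> num0' M"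
proof -
  obtain k where "CARD('a) = 2 ^ k"
    using assms(1) by blast
  then have two: "(2::'a) = 0"
    by (rule char_two_if_card_power_two)
  obtain a b c d :: 'n where distinct: "b \<noteq> a" "c \<noteq> a" "d \<noteq> a" "b \<noteq> c" "b \<noteq> d" "c \<noteq> d"
    using assms(2) by (rule four_distinct_elements)
  define v :: "'n \<Rightarrow> 'a^'n" where "v j = axis a 1 + axis j 1" for j
  have "x *s v b + y *s v c + z *s v d = 0 \<Longrightarrow> x = 0 \<and> y = 0 \<and> z = 0" for x y z
    unfolding v_def by (rule axis_pairs_independent[OF distinct])
  then obtain u x y z where "u \<noteq> 0" "herm u (M *v u) = 0" and u: "u = x *s v b + y *s v c + z *s v d"
    using quadratic_form_zero_in_span3[OF two, of "v b" "v c" "v d" M] by blast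
  have "(\<Sum>i\<in>UNIV. u $ i) = 2 * (x + y + z)"
    by (simp add: u v_def sum.distrib sum_axis flip: sum_distrib_left)
  then have "herm u u = 0"
    by (simp add: herm_self_char_two two)
  with \<open>u \<noteq> 0\<close> \<open>herm u (M *v u) = 0\<close> show ?thesis
    unfolding num0'_def by force
qed

end
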